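(* Let $a_1,\dots,a_N\ge0$, let $b_1,\dots,b_N>0$ be pairwise distinct, $a=\sum_ja_j$, and $K(t)=\sum_{j=1}^Na_jK_j(t)$ with $K_j(t)=\sum_{i=1}^jb_i\psi_i^je^{-b_it}$, $\psi_i^j=\prod_{k=1,k\neq i}^j\frac{b_k}{b_k-b_i}$. Let $u$ solve $\dot u(t)=-au(t)+\int_0^tK(t-s)u(s)\,ds$, $u(0)=u_0$. Then $u(t)\to u_0/Z$ as $t\to\infty$, where $Z=1+\sum_{i=1}^N\frac1{b_i}\sum_{j=i}^Na_j$. *)

theory Defs
  imports "HOL-Analysis.Analysis"
begin

definition psi :: "(nat \<Rightarrow> real) \<Rightarrow> nat \<Rightarrow> nat \<Rightarrow> real" where
  "psi b i j = (\<Prod>k\<in>{1..j} - {i}. b k / (b k - b i))"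

definition Kj :: "(nat \<Rightarrow> real) \<Rightarrow> nat \<Rightarrow> real \<Rightarrow> real" where
  "Kj b j t = (\<Sum>i=1..j. b i * psi b i j * exp (- b i * t))"

definition Kker :: "nat \<Rightarrow> (nat \<Rightarrow> real) \<Rightarrow> (nat \<Rightarrow> real) \<Rightarrow> real \<Rightarrow> real" where
  "Kker N a b t = (\<Sum>j=1..N. a j * Kj b j t)"

end

theory Submission
  imports Defs
begin

(* Kj b j is the density of a sum of independent exponential times with rates b 1, ..., b j, so the
   convolutions x j = Kj b j * u satisfy the linear chain x j' = b j (x (j - 1) - x j), x 0 = u,
   x j (0) = 0.  The Volterra equation thus becomes the ODE system u' = (SUM j. a j (x j - u)).
   Along it the mass u + (SUM j. a j (SUM i<=j. x i / b i)) is conserved, which identifies the limit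
   c = u0 / Z, and the energy (u - c)^2 + (SUM j. a j (SUM i<=j. (x i - c)^2 / b i)) decays at least
   like exp (- t / (1 + (SUM i. i / b i))). *)

lemma psi_Suc:
  assumes "k \<in> {1..n}"
  shows "psi b k (Suc n) = psi b k n * (b (Suc n) / (b (Suc n) - b k))"
proof -
  have "{1..Suc n} - {k} = insert (Suc n) ({1..n} - {k})" using assms by auto
  then show ?thesis unfolding psi_def by (simp add: mult.commute)
qed

lemma psi_Suc_diag: "psi b (Suc n) (Suc n) = (\<Prod>m=1..n. b m / (b m - b (Suc n)))"
proof -
  have "{1..Suc n} - {Suc n} = {1..n}" by auto
  then show ?thesis unfolding psi_def by simp
qed

lemma psi_1_1: "psi b (Suc 0) (Suc 0) = 1"
  unfolding psi_def by simp

lemma inj_on_atLeastAtMost_Suc_neq: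
  assumes "inj_on b {1..Suc n}" "k \<in> {1..n}"
  shows "b k \<noteq> b (Suc n)"
  using assms by (auto dest: inj_onD)

text \<open>Partial fractions: the Laplace transform of \<open>Kj b n\<close> at \<open>s\<close> is the product of
  the Laplace transforms \<open>b m / (b m + s)\<close> of the exponential densities.\<close>

lemma sum_b_psi_divide_eq_prod:
  assumes "1 \<le> n" "inj_on b {1..n}" "\<And>k. k \<in> {1..n} \<Longrightarrow> b k + s \<noteq> 0"
  shows "(\<Sum>k=1..n. b k * psi b k n / (b k + s)) = (\<Prod>m=1..n. b m / (b m + s))"
  using assms
proof (induction n arbitrary: s rule: nat_induct_at_least)
  case base
  then show ?case by (simp add: psi_1_1)
next
  case (Suc n)
  define b' where "b' = b (Suc n)"
  have inj: "inj_on b {1..n}" using Suc.prems(1) by (rule inj_on_subset) auto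
  have ne: "b k \<noteq> b'" if "k \<in> {1..n}" for k
    using inj_on_atLeastAtMost_Suc_neq[OF Suc.prems(1) that] by (simp add: b'_def)
  have s': "b' + s \<noteq> 0" using Suc.prems(2)[of "Suc n"] by (simp add: b'_def)
  have IH_s: "(\<Sum>k=1..n. b k * psi b k n / (b k + s)) = (\<Prod>m=1..n. b m / (b m + s))"
    using Suc.IH[OF inj] Suc.prems(2) by simp
  have IH_b': "(\<Sum>k=1..n. b k * psi b k n / (b k - b')) = (\<Prod>m=1..n. b m / (b m - b'))"
    using Suc.IH[OF inj, of "- b'"] ne by simp
  have summand: "b k * psi b k (Suc n) / (b k + s)
      = b' / (b' + s) * (b k * psi b k n / (b k + s) - b k * psi b k n / (b k - b'))"
    if k: "k \<in> {1..n}" for k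
  proof -
    have "b k + s \<noteq> 0" "b' - b k \<noteq> 0" "b k - b' \<noteq> 0"
      using Suc.prems(2) k ne[OF k] by auto
    then show ?thesis
      unfolding psi_Suc[OF k] b'_def[symmetric] using s'
      by (simp add: divide_simps) (simp add: algebra_simps)
  qed
  have "(\<Sum>k=1..n. b k * psi b k (Suc n) / (b k + s))
      = b' / (b' + s) * ((\<Sum>k=1..n. b k * psi b k n / (b k + s))
          - (\<Sum>k=1..n. b k * psi b k n / (b k - b')))"
    unfolding sum_subtractf[symmetric] sum_distrib_left by (rule sum.cong) (simp_all add: summand)
  then have "(\<Sum>k=1..Suc n. b k * psi b k (Suc n) / (b k + s))
      = b' / (b' + s) * ((\<Sum>k=1..n. b k * psi b k n / (b k + s))
          - (\<Sum>k=1..n. b k * psi b k n / (b k - b')))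
        + b' * psi b (Suc n) (Suc n) / (b' + s)"
    by (simp add: b'_def)
  also have "\<dots> = b' / (b' + s) * (\<Prod>m=1..n. b m / (b m + s))"
    unfolding IH_s IH_b' psi_Suc_diag b'_def[symmetric] using s'
    by (simp add: divide_simps right_diff_distrib)
  finally show ?case by (simp add: b'_def mult.commute)
qed

lemma sum_b_psi_eq_0:
  assumes "1 \<le> n" "inj_on b {1..Suc n}"
  shows "(\<Sum>k=1..Suc n. b k * psi b k (Suc n)) = 0"
proof -
  define b' where "b' = b (Suc n)"
  have ne: "b k \<noteq> b'" if "k \<in> {1..n}" for k
    using inj_on_atLeastAtMost_Suc_neq[OF assms(2) that] by (simp add: b'_def)
  have inj: "inj_on b {1..n}" using assms(2) by (rule inj_on_subset) auto
  have "b k * psi b k (Suc n) = - b' * (b k * psi b k n / (b k - b'))" if k: "k \<in> {1..n}" for k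
  proof -
    have "b' - b k \<noteq> 0" "b k - b' \<noteq> 0" using ne[OF k] by auto
    then show ?thesis unfolding psi_Suc[OF k] b'_def[symmetric] by (simp add: field_simps)
  qed
  then have "(\<Sum>k=1..n. b k * psi b k (Suc n)) = - b' * (\<Sum>k=1..n. b k * psi b k n / (b k - b'))"
    by (simp add: sum_distrib_left)
  also have "\<dots> = - b' * psi b (Suc n) (Suc n)"
    using sum_b_psi_divide_eq_prod[OF assms(1) inj, of "- b'"] ne
    by (simp add: psi_Suc_diag b'_def)
  finally show ?thesis by (simp add: b'_def)
qed

lemma sum_b_psi_chain_step:
  assumes "1 \<le> n" "inj_on b {1..Suc n}"
  shows "(\<Sum>k=1..Suc n. b k * psi b k (Suc n) * (x - b k * y k))
    = b (Suc n) * ((\<Sum>k=1..n. b k * psi b k n * y k) - (\<Sum>k=1..Suc n. b k * psi b k (Suc n) * y k))"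
proof -
  define b' where "b' = b (Suc n)"
  have split: "b k * b k * psi b k (Suc n) * y k
      = b' * (b k * psi b k (Suc n) * y k) - b' * (b k * psi b k n * y k)"
    if k: "k \<in> {1..n}" for k
  proof -
    have "b' - b k \<noteq> 0"
      using inj_on_atLeastAtMost_Suc_neq[OF assms(2) k] by (simp add: b'_def)
    then show ?thesis unfolding psi_Suc[OF k] b'_def[symmetric] by (simp add: field_simps)
  qed
  have "(\<Sum>k=1..n. b k * b k * psi b k (Suc n) * y k)
      = b' * (\<Sum>k=1..n. b k * psi b k (Suc n) * y k) - b' * (\<Sum>k=1..n. b k * psi b k n * y k)"
    unfolding sum_distrib_left sum_subtractf[symmetric] by (rule sum.cong) (simp_all add: split)
  then have sum_split: "(\<Sum>k=1..Suc n. b k * b k * psi b k (Suc n) * y k)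
      = b' * (\<Sum>k=1..Suc n. b k * psi b k (Suc n) * y k) - b' * (\<Sum>k=1..n. b k * psi b k n * y k)"
    by (simp add: b'_def algebra_simps)
  have "(\<Sum>k=1..Suc n. b k * psi b k (Suc n) * (x - b k * y k))
      = (\<Sum>k=1..Suc n. b k * psi b k (Suc n)) * x - (\<Sum>k=1..Suc n. b k * b k * psi b k (Suc n) * y k)"
    by (simp add: sum_distrib_left sum_distrib_right sum_subtractf algebra_simps)
  also have "\<dots> = - (\<Sum>k=1..Suc n. b k * b k * psi b k (Suc n) * y k)"
    using sum_b_psi_eq_0[OF assms] by simp
  finally show ?thesis unfolding sum_split by (simp add: b'_def algebra_simps)
qed

definition exp_convolution :: "real \<Rightarrow> (real \<Rightarrow> real) \<Rightarrow> real \<Rightarrow> real" where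
  "exp_convolution \<beta> u t = exp (- \<beta> * t) * integral {0..t} (\<lambda>s. exp (\<beta> * s) * u s)"

lemma exp_convolution_0 [simp]: "exp_convolution \<beta> u 0 = 0"
  by (simp add: exp_convolution_def)

lemma continuous_on_exp_convolution:
  assumes "continuous_on {0..T} u"
  shows "continuous_on {0..T} (exp_convolution \<beta> u)"
  unfolding exp_convolution_def
  by (intro continuous_intros indefinite_integral_continuous_1 integrable_continuous_interval assms)

lemma exp_convolution_has_derivative:
  assumes "continuous_on {0..} u" "0 < t"
  shows "(exp_convolution \<beta> u has_real_derivative u t - \<beta> * exp_convolution \<beta> u t) (at t)"
proof -
  have "continuous_on {0..t+1} (\<lambda>s. exp (\<beta> * s) * u s)"
    by (intro continuous_intros continuous_on_subset[OF assms(1)]) auto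
  from integral_has_real_derivative[OF this, of t]
  have "((\<lambda>x. integral {0..x} (\<lambda>s. exp (\<beta> * s) * u s)) has_real_derivative
      exp (\<beta> * t) * u t) (at t)"
    using assms(2) at_within_Icc_at[of 0 t "t+1"] by simp
  then show ?thesis
    unfolding exp_convolution_def
    by (auto intro!: derivative_eq_intros simp: algebra_simps mult_exp_exp)
qed

text \<open>For \<open>j \<ge> 1\<close>, stage \<open>j\<close> is the convolution of \<open>u\<close> with \<open>Kj b j\<close>
  (lemma \<open>integral_Kj_convolution\<close>).\<close>

definition chain_stage :: "(nat \<Rightarrow> real) \<Rightarrow> (real \<Rightarrow> real) \<Rightarrow> nat \<Rightarrow> real \<Rightarrow> real" where
  "chain_stage b u j t =
    (if j = 0 then u t else \<Sum>k=1..j. b k * psi b k j * exp_convolution (b k) u t)"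

lemma chain_stage_0 [simp]: "chain_stage b u 0 = u"
  by (simp add: chain_stage_def fun_eq_iff)

lemma chain_stage_at_0: "1 \<le> j \<Longrightarrow> chain_stage b u j 0 = 0"
  by (simp add: chain_stage_def)

lemma continuous_on_chain_stage:
  assumes "continuous_on {0..T} u"
  shows "continuous_on {0..T} (chain_stage b u j)"
  unfolding chain_stage_def
  by (cases "j = 0")
    (simp_all add: assms continuous_on_exp_convolution continuous_on_sum continuous_on_mult_left)

lemma chain_stage_has_derivative:
  assumes "continuous_on {0..} u" "0 < t" "1 \<le> j" "inj_on b {1..j}"
  shows "(chain_stage b u j has_real_derivative
    b j * (chain_stage b u (j - 1) t - chain_stage b u j t)) (at t)"
proof -
  have "((\<lambda>t. \<Sum>k=1..j. b k * psi b k j * exp_convolution (b k) u t) has_real_derivative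
      (\<Sum>k=1..j. b k * psi b k j * (u t - b k * exp_convolution (b k) u t))) (at t)"
    by (intro DERIV_sum DERIV_cmult exp_convolution_has_derivative assms(1,2))
  moreover have "(\<Sum>k=1..j. b k * psi b k j * (u t - b k * exp_convolution (b k) u t))
      = b j * (chain_stage b u (j - 1) t - chain_stage b u j t)"
  proof (cases "j = 1")
    case True
    then show ?thesis by (simp add: chain_stage_def psi_1_1 algebra_simps)
  next
    case False
    then obtain n where "j = Suc n" "1 \<le> n" using assms(3) by (cases j) auto
    then show ?thesis
      using sum_b_psi_chain_step[of n b] assms(4) by (simp add: chain_stage_def)
  qed
  moreover have "chain_stage b u j = (\<lambda>t. \<Sum>k=1..j. b k * psi b k j * exp_convolution (b k) u t)"
    using assms(3) by (simp add: chain_stage_def fun_eq_iff)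
  ultimately show ?thesis by simp
qed

lemma integral_Kj_convolution:
  assumes "continuous_on {0..t} u" "1 \<le> j"
  shows "integral {0..t} (\<lambda>s. Kj b j (t - s) * u s) = chain_stage b u j t"
proof -
  have "exp (- b k * (t - s)) = exp (- b k * t) * exp (b k * s)" for k s
    by (simp add: algebra_simps flip: exp_add)
  then have pointwise: "Kj b j (t - s) * u s
      = (\<Sum>k=1..j. (b k * psi b k j * exp (- b k * t)) * (exp (b k * s) * u s))" for s
    by (simp add: Kj_def sum_distrib_left sum_distrib_right mult_ac)
  have "(\<lambda>s. c * (exp (b k * s) * u s)) integrable_on {0..t}" for c k
    by (intro integrable_continuous_interval continuous_intros assms(1))
  then have "integral {0..t} (\<lambda>s. Kj b j (t - s) * u s)
      = (\<Sum>k=1..j. integral {0..t}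
          (\<lambda>s. (b k * psi b k j * exp (- b k * t)) * (exp (b k * s) * u s)))"
    unfolding pointwise by (intro integral_sum) auto
  also have "\<dots> = chain_stage b u j t"
    using assms(2) by (simp add: chain_stage_def exp_convolution_def mult.assoc)
  finally show ?thesis .
qed

lemma integral_Kker_convolution:
  assumes "continuous_on {0..t} u"
  shows "integral {0..t} (\<lambda>s. Kker N a b (t - s) * u s) = (\<Sum>j=1..N. a j * chain_stage b u j t)"
proof -
  have "(\<lambda>s. c * (Kj b j (t - s) * u s)) integrable_on {0..t}" for c j
    unfolding Kj_def by (intro integrable_continuous_interval continuous_intros assms)
  then show ?thesis
    by (simp add: Kker_def sum_distrib_right mult.assoc integral_sum
        integral_Kj_convolution[OF assms])
qed

lemma sum_atLeast1_telescope:
  fixes f :: "nat \<Rightarrow> 'a::ab_group_add"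
  shows "(\<Sum>i=1..n. f (i - 1) - f i) = f 0 - f n"
  by (induction n) simp_all

lemma chain_flux_identity:
  fixes x :: "nat \<Rightarrow> real"
  shows "(x 0 - c) * (x j - x 0) + (\<Sum>i=1..j. (x i - c) * (x (i - 1) - x i))
    = - ((\<Sum>i=1..j. (x (i - 1) - x i)^2) + (x j - x 0)^2) / 2"
  by (induction j) (simp_all add: power2_eq_square algebra_simps)

lemma sq_diff_le_sum_sq_increments:
  fixes x :: "nat \<Rightarrow> real"
  shows "(x i - x 0)^2 \<le> real i * (\<Sum>m=1..i. (x (m - 1) - x m)^2)"
proof -
  have "(x i - x 0)^2 = (\<Sum>m=1..i. x (m - 1) - x m)^2"
    unfolding sum_atLeast1_telescope by (simp add: power2_commute)
  also have "\<dots> \<le> (\<Sum>m=1..i. (x (m - 1) - x m)^2) * real (card {1..i})"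
    by (rule sum_squared_le_sum_of_squares)
  finally show ?thesis by (simp add: mult.commute)
qed

lemma weighted_energy_le_spread:
  fixes x a b :: "nat \<Rightarrow> real"
  assumes "\<And>j. j \<in> {1..N} \<Longrightarrow> 0 \<le> a j" "\<And>i. i \<in> {1..N} \<Longrightarrow> 0 < b i"
    and balance: "(x 0 - c) + (\<Sum>j=1..N. a j * (\<Sum>i=1..j. (x i - c) / b i)) = 0"
  shows "(x 0 - c)^2 + (\<Sum>j=1..N. a j * (\<Sum>i=1..j. (x i - c)^2 / b i))
    \<le> (\<Sum>j=1..N. a j * (\<Sum>i=1..j. (x i - x 0)^2 / b i))"
proof -
  define e where "e = x 0 - c"
  define T where "T = (\<Sum>j=1..N. a j * (\<Sum>i=1..j. 1 / b i))"
  have "T \<ge> 0"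
    unfolding T_def using assms(1,2) by (force intro!: sum_nonneg mult_nonneg_nonneg)
  have "(x i - x 0)^2 = (x i - c)^2 - 2 * e * (x i - c) + e^2" for i
    by (simp add: e_def power2_eq_square algebra_simps)
  then have "(x i - x 0)^2 / b i
      = (x i - c)^2 / b i - 2 * e * ((x i - c) / b i) + e^2 * (1 / b i)" for i
    by (simp add: diff_divide_distrib add_divide_distrib right_diff_distrib)
  then have "(\<Sum>i=1..j. (x i - x 0)^2 / b i) = (\<Sum>i=1..j. (x i - c)^2 / b i)
      - 2 * e * (\<Sum>i=1..j. (x i - c) / b i) + e^2 * (\<Sum>i=1..j. 1 / b i)" for j
    by (simp only: sum.distrib sum_subtractf sum_distrib_left)
  then have "(\<Sum>j=1..N. a j * (\<Sum>i=1..j. (x i - x 0)^2 / b i))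
      = (\<Sum>j=1..N. a j * (\<Sum>i=1..j. (x i - c)^2 / b i))
        - 2 * e * (\<Sum>j=1..N. a j * (\<Sum>i=1..j. (x i - c) / b i)) + e^2 * T"
    by (simp add: T_def sum.distrib sum_subtractf sum_distrib_left right_diff_distrib distrib_left
        mult_ac)
  also have "\<dots> = (x 0 - c)^2 + (\<Sum>j=1..N. a j * (\<Sum>i=1..j. (x i - c)^2 / b i)) + e^2 * (1 + T)"
  proof -
    have M: "(\<Sum>j=1..N. a j * (\<Sum>i=1..j. (x i - c) / b i)) = - e"
      using balance by (simp add: e_def)
    show ?thesis unfolding M by (simp add: e_def power2_eq_square algebra_simps)
  qed
  finally show ?thesis using \<open>T \<ge> 0\<close> by simp
qed

lemma weighted_spread_le_increments:
  fixes x a b :: "nat \<Rightarrow> real"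
  assumes "\<And>j. j \<in> {1..N} \<Longrightarrow> 0 \<le> a j" "\<And>i. i \<in> {1..N} \<Longrightarrow> 0 < b i"
  shows "(\<Sum>j=1..N. a j * (\<Sum>i=1..j. (x i - x 0)^2 / b i))
    \<le> (\<Sum>i=1..N. real i / b i) * (\<Sum>j=1..N. a j * (\<Sum>i=1..j. (x (i - 1) - x i)^2))"
proof -
  define P where "P j = (\<Sum>i=1..j. (x (i - 1) - x i)^2)" for j
  have "(\<Sum>i=1..j. (x i - x 0)^2 / b i) \<le> (\<Sum>i=1..N. real i / b i) * P j" if j: "j \<in> {1..N}" for j
  proof -
    have "(\<Sum>i=1..j. (x i - x 0)^2 / b i) \<le> (\<Sum>i=1..j. real i / b i * P j)"
    proof (rule sum_mono)
      fix i assume i: "i \<in> {1..j}"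
      have "(x i - x 0)^2 \<le> real i * P i"
        unfolding P_def by (rule sq_diff_le_sum_sq_increments)
      also have "\<dots> \<le> real i * P j"
        unfolding P_def using i by (intro mult_left_mono sum_mono2) auto
      finally show "(x i - x 0)^2 / b i \<le> real i / b i * P j"
        using assms(2)[of i] i j by (simp add: divide_right_mono)
    qed
    also have "\<dots> \<le> (\<Sum>i=1..N. real i / b i) * P j"
      unfolding sum_distrib_right[symmetric] using j assms(2)
      by (intro mult_right_mono sum_mono2) (auto simp: P_def intro!: sum_nonneg divide_nonneg_pos)
    finally show ?thesis .
  qed
  then have "(\<Sum>j=1..N. a j * (\<Sum>i=1..j. (x i - x 0)^2 / b i))
      \<le> (\<Sum>j=1..N. a j * ((\<Sum>i=1..N. real i / b i) * P j))"
    using assms(1) by (intro sum_mono mult_left_mono) auto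
  then show ?thesis by (simp add: P_def sum_distrib_left mult_ac)
qed

text \<open>The left-hand side is the time derivative of the energy at the chain state \<open>x\<close>
  (with \<open>x 0 = u\<close>); the balance hypothesis is what conservation of mass yields.\<close>

lemma chain_energy_dissipation_le:
  fixes x a b :: "nat \<Rightarrow> real"
  assumes "\<And>j. j \<in> {1..N} \<Longrightarrow> 0 \<le> a j" "\<And>i. i \<in> {1..N} \<Longrightarrow> 0 < b i"
    and balance: "(x 0 - c) + (\<Sum>j=1..N. a j * (\<Sum>i=1..j. (x i - c) / b i)) = 0"
  shows "2 * (x 0 - c) * (\<Sum>j=1..N. a j * (x j - x 0))
      + (\<Sum>j=1..N. a j * (\<Sum>i=1..j. 2 * (x i - c) * (x (i - 1) - x i)))
    \<le> - ((x 0 - c)^2 + (\<Sum>j=1..N. a j * (\<Sum>i=1..j. (x i - c)^2 / b i)))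
        / (1 + (\<Sum>i=1..N. real i / b i))"
proof -
  define E where "E = (x 0 - c)^2 + (\<Sum>j=1..N. a j * (\<Sum>i=1..j. (x i - c)^2 / b i))"
  define S where "S = (\<Sum>j=1..N. a j * (\<Sum>i=1..j. (x (i - 1) - x i)^2))"
  define C where "C = (\<Sum>i=1..N. real i / b i)"
  have "C \<ge> 0" unfolding C_def using assms(2) by (force intro!: sum_nonneg)
  have "S \<ge> 0" unfolding S_def using assms(1) by (force intro!: sum_nonneg mult_nonneg_nonneg)
  have "E \<le> (\<Sum>j=1..N. a j * (\<Sum>i=1..j. (x i - x 0)^2 / b i))"
    unfolding E_def by (rule weighted_energy_le_spread) (use assms in auto)
  also have "\<dots> \<le> C * S"
    unfolding C_def S_def by (rule weighted_spread_le_increments) (use assms in auto)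
  also have "\<dots> \<le> (1 + C) * S" using \<open>S \<ge> 0\<close> by (simp add: mult_right_mono)
  finally have "E / (1 + C) \<le> S" using \<open>C \<ge> 0\<close> by (simp add: divide_le_eq mult.commute)
  have "2 * (x 0 - c) * (a j * (x j - x 0)) + a j * (\<Sum>i=1..j. 2 * (x i - c) * (x (i - 1) - x i))
      = - (a j * ((\<Sum>i=1..j. (x (i - 1) - x i)^2) + (x j - x 0)^2))" for j
  proof -
    have "2 * (x 0 - c) * (a j * (x j - x 0)) + a j * (\<Sum>i=1..j. 2 * (x i - c) * (x (i - 1) - x i))
        = 2 * a j * ((x 0 - c) * (x j - x 0) + (\<Sum>i=1..j. (x i - c) * (x (i - 1) - x i)))"
      by (simp add: sum_distrib_left algebra_simps)
    then show ?thesis unfolding chain_flux_identity by (simp add: algebra_simps)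
  qed
  then have "2 * (x 0 - c) * (\<Sum>j=1..N. a j * (x j - x 0))
      + (\<Sum>j=1..N. a j * (\<Sum>i=1..j. 2 * (x i - c) * (x (i - 1) - x i)))
    = - (\<Sum>j=1..N. a j * ((\<Sum>i=1..j. (x (i - 1) - x i)^2) + (x j - x 0)^2))"
    by (simp add: sum_distrib_left sum.distrib[symmetric] sum_negf[symmetric])
  also have "\<dots> \<le> - S"
    unfolding S_def using assms(1) by (auto intro!: sum_mono mult_left_mono)
  also have "\<dots> \<le> - E / (1 + C)"
    using \<open>E / (1 + C) \<le> S\<close> minus_divide_left[of E "1 + C"] by linarith
  finally show ?thesis unfolding E_def C_def .
qed

lemma exp_bound_of_differential_inequality:
  fixes V V' :: "real \<Rightarrow> real"
  assumes "0 \<le> T" "continuous_on {0..T} V"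
    and "\<And>t. 0 < t \<Longrightarrow> t < T \<Longrightarrow> (V has_real_derivative V' t) (at t)"
    and "\<And>t. 0 < t \<Longrightarrow> t < T \<Longrightarrow> V' t \<le> - r * V t"
  shows "V T \<le> V 0 * exp (- r * T)"
proof -
  define \<Phi> where "\<Phi> t = exp (r * t) * V t" for t
  have "\<Phi> T \<le> \<Phi> 0"
  proof (rule DERIV_nonpos_imp_decreasing_open[OF assms(1)])
    fix t assume t: "0 < t" "t < T"
    have "(\<Phi> has_real_derivative exp (r * t) * (r * V t + V' t)) (at t)"
      unfolding \<Phi>_def by (auto intro!: derivative_eq_intros assms(3)[OF t] simp: algebra_simps)
    moreover have "exp (r * t) * (r * V t + V' t) \<le> 0"
      using assms(4)[OF t] by (simp add: mult_nonneg_nonpos)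
    ultimately show "\<exists>y. (\<Phi> has_real_derivative y) (at t) \<and> y \<le> 0" by blast
  next
    show "continuous_on {0..T} \<Phi>" unfolding \<Phi>_def by (intro continuous_intros assms(2))
  qed
  then show ?thesis by (simp add: \<Phi>_def exp_minus field_simps)
qed

lemma tendsto_of_sq_diff_le:
  fixes f g :: "'a \<Rightarrow> real"
  assumes "(g \<longlongrightarrow> 0) F" "\<forall>\<^sub>F x in F. (f x - c)^2 \<le> g x"
  shows "(f \<longlongrightarrow> c) F"
proof -
  have "((\<lambda>x. (f x - c)^2) \<longlongrightarrow> 0) F"
    by (rule tendsto_sandwich[OF always_eventually assms(2) tendsto_const assms(1)]) simp
  from tendsto_real_sqrt[OF this] have "((\<lambda>x. \<bar>f x - c\<bar>) \<longlongrightarrow> 0) F"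
    by simp
  then show ?thesis by (simp add: tendsto_rabs_zero_iff LIM_zero_iff)
qed

locale volterra_chain =
  fixes N :: nat and a b :: "nat \<Rightarrow> real" and u :: "real \<Rightarrow> real"
  assumes a_nonneg: "\<And>j. j \<in> {1..N} \<Longrightarrow> 0 \<le> a j"
    and b_pos: "\<And>j. j \<in> {1..N} \<Longrightarrow> 0 < b j"
    and b_inj: "inj_on b {1..N}"
    and u_continuous: "continuous_on {0..} u"
    and u_has_derivative: "\<And>t. 0 < t \<Longrightarrow>
      (u has_real_derivative (\<Sum>j=1..N. a j * (chain_stage b u j t - u t))) (at t)"
begin

lemma stage_has_derivative:
  assumes "0 < t" "j \<in> {1..N}"
  shows "(chain_stage b u j has_real_derivative
    b j * (chain_stage b u (j - 1) t - chain_stage b u j t)) (at t)"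
  using assms by (intro chain_stage_has_derivative u_continuous inj_on_subset[OF b_inj]) auto

lemma continuous_on_stage: "continuous_on {0..T} (chain_stage b u j)"
  by (intro continuous_on_chain_stage continuous_on_subset[OF u_continuous]) auto

lemma stage_divide_has_derivative:
  assumes "0 < t" "i \<in> {1..N}"
  shows "((\<lambda>t. chain_stage b u i t / b i) has_real_derivative
    chain_stage b u (i - 1) t - chain_stage b u i t) (at t)"
  using DERIV_cdivide[OF stage_has_derivative[OF assms], of "b i"] b_pos[OF assms(2)] by simp

definition mass :: "real \<Rightarrow> real" where
  "mass t = u t + (\<Sum>j=1..N. a j * (\<Sum>i=1..j. chain_stage b u i t / b i))"

lemma mass_has_derivative:
  assumes "0 < t"
  shows "(mass has_real_derivative 0) (at t)"
proof -
  have "(mass has_real_derivative (\<Sum>j=1..N. a j * (chain_stage b u j t - u t))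
      + (\<Sum>j=1..N. a j * (\<Sum>i=1..j. chain_stage b u (i - 1) t - chain_stage b u i t))) (at t)"
    unfolding mass_def[abs_def] using assms
    by (intro DERIV_add u_has_derivative DERIV_sum DERIV_cmult stage_divide_has_derivative) auto
  then show ?thesis
    unfolding sum_atLeast1_telescope[of "\<lambda>i. chain_stage b u i t"]
    by (simp add: sum.distrib[symmetric] algebra_simps)
qed

lemma mass_eq:
  assumes "0 \<le> t"
  shows "mass t = u 0"
proof (cases "t = 0")
  case False
  have "mass t = mass 0"
  proof (rule DERIV_isconst_end[of 0 t mass])
    show "0 < t" using assms False by simp
    show "continuous_on {0..t} mass"
      unfolding mass_def using b_pos
      by (intro continuous_intros continuous_on_stage continuous_on_subset[OF u_continuous])
        fastforce+
  qed (rule mass_has_derivative)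
  then show ?thesis by (simp add: mass_def chain_stage_at_0)
qed (simp add: mass_def chain_stage_at_0)

definition equilibrium :: real where
  "equilibrium = u 0 / (1 + (\<Sum>j=1..N. a j * (\<Sum>i=1..j. 1 / b i)))"

lemma balance:
  assumes "0 \<le> t"
  shows "(u t - equilibrium)
    + (\<Sum>j=1..N. a j * (\<Sum>i=1..j. (chain_stage b u i t - equilibrium) / b i)) = 0"
proof -
  define Z where "Z = 1 + (\<Sum>j=1..N. a j * (\<Sum>i=1..j. 1 / b i))"
  have "Z > 0"
    unfolding Z_def using a_nonneg b_pos
    by (force intro!: add_pos_nonneg sum_nonneg mult_nonneg_nonneg)
  have "(\<Sum>j=1..N. a j * (\<Sum>i=1..j. (chain_stage b u i t - equilibrium) / b i))
      = (\<Sum>j=1..N. a j * (\<Sum>i=1..j. chain_stage b u i t / b i)) - equilibrium * (Z - 1)"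
    by (simp add: Z_def diff_divide_distrib sum_subtractf sum_distrib_left algebra_simps)
  moreover have "u t + (\<Sum>j=1..N. a j * (\<Sum>i=1..j. chain_stage b u i t / b i)) = equilibrium * Z"
    using mass_eq[OF assms] \<open>Z > 0\<close> by (simp add: mass_def equilibrium_def Z_def)
  ultimately show ?thesis by (simp add: algebra_simps)
qed

definition energy :: "real \<Rightarrow> real" where
  "energy t = (u t - equilibrium)^2
    + (\<Sum>j=1..N. a j * (\<Sum>i=1..j. (chain_stage b u i t - equilibrium)^2 / b i))"

lemma energy_has_derivative:
  assumes "0 < t"
  shows "(energy has_real_derivative
      2 * (u t - equilibrium) * (\<Sum>j=1..N. a j * (chain_stage b u j t - u t))
      + (\<Sum>j=1..N. a j * (\<Sum>i=1..j. 2 * (chain_stage b u i t - equilibrium)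
          * (chain_stage b u (i - 1) t - chain_stage b u i t)))) (at t)"
proof -
  have sq: "((\<lambda>t. (f t - equilibrium)^2) has_real_derivative 2 * (f t - equilibrium) * D) (at t)"
    if "(f has_real_derivative D) (at t)" for f D
    using that by (auto intro!: derivative_eq_intros)
  have stage_sq: "((\<lambda>t. (chain_stage b u i t - equilibrium)^2 / b i) has_real_derivative
      2 * (chain_stage b u i t - equilibrium)
        * (chain_stage b u (i - 1) t - chain_stage b u i t)) (at t)"
    if "i \<in> {1..N}" for i
    using DERIV_cdivide[OF sq[OF stage_has_derivative[OF assms that]], of "b i"] b_pos[OF that]
    by simp
  show ?thesis
    unfolding energy_def[abs_def] using assms
    by (intro DERIV_add sq u_has_derivative DERIV_sum DERIV_cmult stage_sq) auto
qed

lemma energy_decay: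
  assumes "0 \<le> t"
  shows "energy t \<le> energy 0 * exp (- t / (1 + (\<Sum>i=1..N. real i / b i)))"
proof -
  define C where "C = 1 + (\<Sum>i=1..N. real i / b i)"
  define D where "D s = 2 * (u s - equilibrium) * (\<Sum>j=1..N. a j * (chain_stage b u j s - u s))
      + (\<Sum>j=1..N. a j * (\<Sum>i=1..j. 2 * (chain_stage b u i s - equilibrium)
          * (chain_stage b u (i - 1) s - chain_stage b u i s)))" for s
  have "energy t \<le> energy 0 * exp (- (1 / C) * t)"
  proof (rule exp_bound_of_differential_inequality[OF assms])
    show "continuous_on {0..t} energy"
      unfolding energy_def using b_pos
      by (intro continuous_intros continuous_on_stage continuous_on_subset[OF u_continuous])
        fastforce+
  next
    fix s :: real assume "0 < s"
    then show "(energy has_real_derivative D s) (at s)"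
      unfolding D_def by (rule energy_has_derivative)
    have "D s \<le> - energy s / C"
      unfolding D_def energy_def C_def
      using chain_energy_dissipation_le[where x = "\<lambda>j. chain_stage b u j s" and c = equilibrium]
        a_nonneg b_pos balance[of s] \<open>0 < s\<close>
      by simp
    then show "D s \<le> - (1 / C) * energy s" by simp
  qed
  then show ?thesis by (simp add: C_def)
qed

lemma tendsto_equilibrium: "(u \<longlongrightarrow> equilibrium) at_top"
proof -
  define C where "C = 1 + (\<Sum>i=1..N. real i / b i)"
  have "C > 0" unfolding C_def using b_pos by (force intro!: add_pos_nonneg sum_nonneg)
  have bound: "(u t - equilibrium)^2 \<le> energy 0 * exp (- t / C)" if "0 \<le> t" for t
  proof -
    have "(u t - equilibrium)^2 \<le> energy t"
      unfolding energy_def using a_nonneg b_pos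
      by (force intro!: sum_nonneg mult_nonneg_nonneg divide_nonneg_pos)
    also have "\<dots> \<le> energy 0 * exp (- t / C)"
      unfolding C_def by (rule energy_decay[OF that])
    finally show ?thesis .
  qed
  have "filterlim (\<lambda>t. (1 / C) * t) at_top at_top"
    using \<open>C > 0\<close>
    by (intro filterlim_tendsto_pos_mult_at_top[OF tendsto_const] filterlim_ident) auto
  then have "filterlim (\<lambda>t. - t / C) at_bot at_top"
    by (simp add: filterlim_uminus_at_top)
  then have "((\<lambda>t. energy 0 * exp (- t / C)) \<longlongrightarrow> 0) at_top"
    by (intro tendsto_mult_right_zero filterlim_compose[OF exp_at_bot])
  moreover have "\<forall>\<^sub>F t in at_top. (u t - equilibrium)^2 \<le> energy 0 * exp (- t / C)"
    using bound by (auto simp: eventually_at_top_linorder)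
  ultimately show ?thesis by (rule tendsto_of_sq_diff_le)
qed

end

lemma sum_atLeastAtMost_triangle_swap:
  fixes N :: nat
  shows "(\<Sum>i=1..N. \<Sum>j=i..N. h i j) = (\<Sum>j=1..N. \<Sum>i=1..j. h i j)"
  by (induction N) (simp_all add: sum.distrib)

theorem mainTheorem5:
  fixes N :: nat and a b :: "nat \<Rightarrow> real" and u :: "real \<Rightarrow> real" and u0 :: real
  assumes a_nonneg: "\<And>j. j \<in> {1..N} \<Longrightarrow> a j \<ge> 0"
    and b_pos: "\<And>j. j \<in> {1..N} \<Longrightarrow> b j > 0"
    and b_distinct: "inj_on b {1..N}"
    and u_init: "u 0 = u0"
    and u_ode: "\<And>t. t \<ge> 0 \<Longrightarrow>
       (u has_real_derivative
          (- (\<Sum>j=1..N. a j) * u t + integral {0..t} (\<lambda>s. Kker N a b (t - s) * u s)))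
       (at t within {0..})"
  shows "(u \<longlongrightarrow> u0 / (1 + (\<Sum>i=1..N. (1 / b i) * (\<Sum>j=i..N. a j)))) at_top"
proof -
  have u_cont: "continuous_on {0..} u"
    unfolding continuous_on_eq_continuous_within using u_ode by (auto intro: DERIV_continuous)
  interpret volterra_chain N a b u
  proof
    fix t :: real assume "0 < t"
    then have "(u has_real_derivative
        - (\<Sum>j=1..N. a j) * u t + integral {0..t} (\<lambda>s. Kker N a b (t - s) * u s)) (at t)"
      using u_ode[of t] at_within_interior[of t "{0..}"] by simp
    moreover have "integral {0..t} (\<lambda>s. Kker N a b (t - s) * u s)
        = (\<Sum>j=1..N. a j * chain_stage b u j t)"
      by (intro integral_Kker_convolution continuous_on_subset[OF u_cont]) auto
    moreover have "(\<Sum>j=1..N. a j * (chain_stage b u j t - u t))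
        = - (\<Sum>j=1..N. a j) * u t + (\<Sum>j=1..N. a j * chain_stage b u j t)"
      by (simp add: right_diff_distrib sum_subtractf sum_distrib_right)
    ultimately show "(u has_real_derivative (\<Sum>j=1..N. a j * (chain_stage b u j t - u t))) (at t)"
      by simp
  qed (fact a_nonneg b_pos b_distinct u_cont)+
  have "(\<Sum>i=1..N. (1 / b i) * (\<Sum>j=i..N. a j)) = (\<Sum>j=1..N. a j * (\<Sum>i=1..j. 1 / b i))"
    using sum_atLeastAtMost_triangle_swap[of "\<lambda>i j. a j / b i" N]
    by (simp add: sum_distrib_left sum_distrib_right)
  then show ?thesis
    using tendsto_equilibrium unfolding equilibrium_def u_init by (simp only:)
qed

end
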